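(* Let $a,b,c,d$ be non-negative integers with $\gcd(a,b,c,d)=1$ satisfying $(a+b+c+d)^2=2(a^2+b^2+c^2+d^2)$. Then the sum of any two of them is a sum of two squares of integers; e.g. $a+b=p^2+q^2$ for some $p,q\in\mathbb{Z}$. *)

theory Defs
  imports Main
begin

definition sum_two_sq :: "int \<Rightarrow> bool" where
  "sum_two_sq n \<longleftrightarrow> (\<exists>p q :: int. n = p^2 + q^2)"

end

theory Submission
  imports Defs "HOL-Computational_Algebra.Primes" "HOL-Library.Discrete_Functions"
begin

text \<open>The Descartes relation gives \<open>(a + b)(c + d) = X\<^sup>2 + Y\<^sup>2\<close> with
  \<open>X + Y = a - b\<close> and \<open>X - Y = c - d\<close>, so an odd prime dividing \<open>a + b\<close>, \<open>c + d\<close>, \<open>X\<close>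
  and \<open>Y\<close> divides each of \<open>a, b, c, d\<close>. It then suffices that \<open>n\<close> is a sum of two squares
  whenever \<open>n t = X\<^sup>2 + Y\<^sup>2\<close> and no odd prime divides all of \<open>n, t, X, Y\<close>. This goes by
  descent on \<open>n\<close>: a prime \<open>p\<close> dividing \<open>n, X, Y\<close> splits off from \<open>n\<close> either as \<open>p\<^sup>2\<close> or,
  when \<open>p\<close> also divides \<open>t\<close>, as \<open>2\<close>; and once \<open>n\<close> is coprime to \<open>Y\<close>, \<open>X/Y\<close> is a square
  root of \<open>-1\<close> modulo \<open>n\<close>, which by Thue's lemma makes \<open>n\<close> a sum of two squares.\<close>

lemma sum_two_sq_mult:
  assumes "sum_two_sq x" "sum_two_sq y"
  shows "sum_two_sq (x * y)"
proof -
  obtain a b c d where "x = a^2 + b^2" "y = c^2 + d^2"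
    using assms unfolding sum_two_sq_def by blast
  then have "x * y = (a*c - b*d)^2 + (a*d + b*c)^2"
    by (simp add: power2_eq_square algebra_simps)
  then show ?thesis unfolding sum_two_sq_def by blast
qed

lemma sum_two_sq_power2: "sum_two_sq (p^2)"
  unfolding sum_two_sq_def by (intro exI[of _ p] exI[of _ 0]) simp

lemma sum_two_sq_2: "sum_two_sq 2"
  unfolding sum_two_sq_def by (intro exI[of _ 1]) simp

lemma thue_lemma:
  fixes n r s :: int
  assumes "n \<ge> 1" "s \<ge> 0" "n < (s + 1)^2"
  obtains u v where "\<bar>u\<bar> \<le> s" "\<bar>v\<bar> \<le> s" "u \<noteq> 0 \<or> v \<noteq> 0" "n dvd u - r * v"
proof -
  define A where "A = {0..s} \<times> {0..s}"
  define f where "f = (\<lambda>(i, j). (i - r * j) mod n)"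
  have "\<not> inj_on f A"
  proof
    assume "inj_on f A"
    moreover have "f ` A \<subseteq> {0..n - 1}" unfolding f_def using assms(1) by auto
    ultimately have "card A \<le> card {0..n - 1}" using card_inj_on_le by blast
    moreover have "int (card A) = (s + 1)^2"
      unfolding A_def using assms(2) by (simp add: card_cartesian_product power2_eq_square)
    moreover have "int (card {0..n - 1}) = n" using assms(1) by simp
    ultimately show False using assms(3) by linarith
  qed
  then obtain i j i' j' where ij: "(i, j) \<in> A" "(i', j') \<in> A" "(i, j) \<noteq> (i', j')"
      "f (i, j) = f (i', j')"
    unfolding inj_on_def by auto
  have "n dvd (i - r * j) - (i' - r * j')"
    using ij(4) unfolding f_def by (simp add: mod_eq_dvd_iff)
  then have "n dvd (i - i') - r * (j - j')" by (simp add: algebra_simps)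
  moreover have "\<bar>i - i'\<bar> \<le> s" "\<bar>j - j'\<bar> \<le> s" "i - i' \<noteq> 0 \<or> j - j' \<noteq> 0"
    using ij(1-3) unfolding A_def by auto
  ultimately show ?thesis using that by blast
qed

lemma sum_two_sq_if_dvd_square_plus_one:
  fixes n r :: int
  assumes n: "n \<ge> 1" and dvd: "n dvd r^2 + 1"
  shows "sum_two_sq n"
proof -
  define s where "s = int (floor_sqrt (nat n))"
  have "int (floor_sqrt (nat n) ^ 2) \<le> n" "n < int (Suc (floor_sqrt (nat n)) ^ 2)"
    using n floor_sqrt_power2_le[of "nat n"] Suc_floor_sqrt_power2_gt[of "nat n"] by linarith+
  then have s: "s \<ge> 0" "s^2 \<le> n" "n < (s + 1)^2"
    unfolding s_def by (simp_all add: add.commute)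
  obtain u v where uv: "\<bar>u\<bar> \<le> s" "\<bar>v\<bar> \<le> s" "u \<noteq> 0 \<or> v \<noteq> 0" "n dvd u - r * v"
    using thue_lemma[OF n s(1,3)] by blast
  then obtain k where k: "u = r * v + n * k" by (metis dvdE diff_eq_eq add.commute)
  obtain l where l: "r^2 + 1 = n * l" using dvd by blast
  have "u^2 + v^2 = v^2 * (r^2 + 1) + n * (2 * r * v * k + n * k^2)"
    unfolding k by (simp add: power2_eq_square algebra_simps)
  also have "\<dots> = n * (v^2 * l + 2 * r * v * k + n * k^2)"
    unfolding l by (simp add: algebra_simps)
  finally obtain m where m: "u^2 + v^2 = n * m" by blast
  have "u^2 \<le> s^2" "v^2 \<le> s^2"
    using uv(1,2) s(1) by (metis abs_le_square_iff abs_of_nonneg)+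
  show ?thesis
  proof (cases "s^2 = n")
    case True
    then show ?thesis unfolding sum_two_sq_def by (intro exI[of _ s] exI[of _ 0]) simp
  next
    case False
    with s(2) \<open>u^2 \<le> s^2\<close> \<open>v^2 \<le> s^2\<close> have "n * m < n * 2" using m by linarith
    then have "m < 2" using n by simp
    moreover have "m > 0"
      using m n uv(3) sum_power2_gt_zero_iff[of u v] by (simp add: zero_less_mult_iff)
    ultimately have "m = 1" by simp
    then show ?thesis using m unfolding sum_two_sq_def by auto
  qed
qed

lemma coprime_if_dvd_sum_squares:
  fixes n X Y :: int
  assumes "n \<noteq> 0" "n dvd X^2 + Y^2"
    and "\<And>p. prime p \<Longrightarrow> p dvd n \<Longrightarrow> p dvd X \<Longrightarrow> \<not> p dvd Y"
  shows "coprime n Y"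
proof (rule ccontr)
  assume "\<not> coprime n Y"
  then have "\<not> is_unit (gcd n Y)" "gcd n Y \<noteq> 0"
    using assms(1) by (simp_all add: coprime_iff_gcd_eq_1)
  then obtain p where p: "prime p" "p dvd n" "p dvd Y"
    using prime_divisor_exists by (metis dvd_trans gcd_dvd1 gcd_dvd2)
  then have "p dvd X^2 + Y^2" "p dvd Y^2" using assms(2) by (auto intro: dvd_trans)
  then have "p dvd X" using p(1) by (metis dvd_add_left_iff prime_dvd_power)
  then show False using assms(3) p by blast
qed

lemma sum_two_sq_if_dvd_coprime:
  fixes n X Y :: int
  assumes n: "n \<ge> 1" and dvd: "n dvd X^2 + Y^2" and coprime: "coprime n Y"
  shows "sum_two_sq n"
proof -
  obtain u v where uv: "u * Y + v * n = 1"
    using bezout_int[of Y n] coprime by (metis coprime_commute coprime_iff_gcd_eq_1)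
  define r where "r = X * u"
  have "(r^2 + 1) * Y^2 = X^2 * (u * Y)^2 + Y^2"
    unfolding r_def by (simp add: power2_eq_square algebra_simps)
  also have "u * Y = 1 - v * n" using uv by simp
  also have "X^2 * (1 - v * n)^2 + Y^2 = (X^2 + Y^2) + n * (X^2 * (v^2 * n - 2 * v))"
    by (simp add: power2_eq_square algebra_simps)
  finally have "n dvd (r^2 + 1) * Y^2" using dvd by simp
  then have "n dvd r^2 + 1"
    using coprime by (simp add: coprime_dvd_mult_left_iff)
  then show ?thesis using sum_two_sq_if_dvd_square_plus_one n by blast
qed

lemma sum_squares_descent_step:
  fixes n t X Y p :: int
  assumes n: "n \<ge> 1" and eq: "n * t = X^2 + Y^2"
    and p: "prime p" "p dvd n" "p dvd X" "p dvd Y"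
    and two: "p dvd t \<Longrightarrow> p = 2"
  obtains m n' t' where "n = m * n'" "m > 1" "sum_two_sq m" "t' dvd t"
    "n' * t' = (X div p)^2 + (Y div p)^2"
proof -
  have p2: "p \<ge> 2" using p(1) prime_ge_2_int by blast
  define X' Y' where "X' = X div p" and "Y' = Y div p"
  have "X = p * X'" "Y = p * Y'" unfolding X'_def Y'_def using p(3,4) by simp_all
  then have eq': "n * t = p^2 * (X'^2 + Y'^2)" using eq by (simp add: power2_eq_square algebra_simps)
  show ?thesis
  proof (cases "p^2 dvd n")
    case True
    then obtain n' where n': "n = p^2 * n'" by blast
    have "n' * t = X'^2 + Y'^2" using eq' p2 unfolding n' by (simp add: mult.assoc)
    moreover have "p^2 > 1" using p2 by (simp add: one_less_power)
    ultimately show ?thesis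
      using that[OF n' _ sum_two_sq_power2 dvd_refl] unfolding X'_def Y'_def by simp
  next
    case False
    obtain n1 where n1: "n = p * n1" using p(2) by blast
    with False have "\<not> p dvd n1" by (auto simp: power2_eq_square)
    have eq1: "n1 * t = p * (X'^2 + Y'^2)"
      using eq' p2 unfolding n1 by (simp add: power2_eq_square mult.assoc)
    then have "p dvd n1 * t" by simp
    then have "p dvd t" using \<open>\<not> p dvd n1\<close> p(1) prime_dvd_multD by blast
    then have "p = 2" by (rule two)
    then obtain t' where t': "t = 2 * t'" using \<open>p dvd t\<close> by blast
    have "n1 * t' = X'^2 + Y'^2" using eq1 \<open>p = 2\<close> unfolding t' by simp
    then show ?thesis
      using that[of 2 n1 t'] n1 t' \<open>p = 2\<close> sum_two_sq_2 unfolding X'_def Y'_def by simp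
  qed
qed

lemma sum_two_sq_if_mult_eq_sum_squares:
  fixes n t X Y :: int
  assumes "n \<ge> 0" "n * t = X^2 + Y^2"
    and "\<And>p. prime p \<Longrightarrow> odd p \<Longrightarrow> p dvd n \<Longrightarrow> p dvd t \<Longrightarrow> p dvd X \<Longrightarrow> \<not> p dvd Y"
  shows "sum_two_sq n"
  using assms
proof (induction "nat n" arbitrary: n t X Y rule: less_induct)
  case less
  have dvd: "n dvd X^2 + Y^2" using less.prems(2) by (metis dvd_triv_left)
  consider "n = 0" | "n \<ge> 1" "coprime n Y" | p where "n \<ge> 1" "prime p" "p dvd n" "p dvd X" "p dvd Y"
    using less.prems(1) coprime_if_dvd_sum_squares[OF _ dvd] by force
  then show ?case
  proof cases
    case 1
    then show ?thesis using sum_two_sq_power2[of 0] by simp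
  next
    case 2
    then show ?thesis using dvd sum_two_sq_if_dvd_coprime by blast
  next
    case (3 p)
    have "p = 2" if "p dvd t"
    proof -
      have "even p" using less.prems(3)[of p] 3 that by blast
      then show ?thesis using 3(2) prime_odd_int[of p] prime_ge_2_int[of p] by force
    qed
    then obtain m n' t' where m: "n = m * n'" "m > 1" "sum_two_sq m" "t' dvd t"
        and eq': "n' * t' = (X div p)^2 + (Y div p)^2"
      using sum_squares_descent_step[OF 3(1) less.prems(2) 3(2-5)] by blast
    have "0 < m * n'" using m(1) 3(1) by simp
    then have "n' > 0" using m(2) by (simp add: zero_less_mult_iff)
    then have "nat n' < nat n" using m(1,2) by simp
    moreover have "\<not> q dvd Y div p"
      if "prime q" "odd q" "q dvd n'" "q dvd t'" "q dvd X div p" for q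
    proof -
      have "X div p dvd X" "Y div p dvd Y"
        using 3(4,5) by (metis dvd_div_mult_self dvd_triv_left)+
      then show ?thesis
        using less.prems(3)[of q] that m(1,4) by (meson dvd_trans dvd_mult)
    qed
    ultimately have "sum_two_sq n'" using less.hyps \<open>n' > 0\<close> eq' by simp
    then show ?thesis using m(1,3) sum_two_sq_mult by blast
  qed
qed

lemma descartes_relation_mult_eq_sum_squares:
  fixes a b c d :: int
  assumes "(a + b + c + d)^2 = 2 * (a^2 + b^2 + c^2 + d^2)"
  obtains X Y where "(a + b) * (c + d) = X^2 + Y^2" "X + Y = a - b" "X - Y = c - d"
proof -
  have "even ((a + b + c + d)^2)" using assms by simp
  then have "even (a + b + c + d)" by simp
  then obtain k where k: "a + b + c + d = 2 * k" by blast
  define X Y where "X = a + c - k" and "Y = k - b - c"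
  have d: "d = 2 * k - a - b - c" using k by simp
  have "2 * (X^2 + Y^2 - (a + b) * (c + d)) = 2 * (a^2 + b^2 + c^2 + d^2) - (a + b + c + d)^2"
    unfolding X_def Y_def d by (simp add: power2_eq_square algebra_simps)
  then have "(a + b) * (c + d) = X^2 + Y^2" using assms by simp
  moreover have "X + Y = a - b" "X - Y = c - d" unfolding X_def Y_def d by simp_all
  ultimately show ?thesis using that by blast
qed

lemma sum_two_sq_add_if_descartes_relation:
  fixes a b c d :: int
  assumes "a + b \<ge> 0" and gcd: "gcd (gcd a b) (gcd c d) = 1"
    and "(a + b + c + d)^2 = 2 * (a^2 + b^2 + c^2 + d^2)"
  shows "sum_two_sq (a + b)"
proof -
  obtain X Y where eq: "(a + b) * (c + d) = X^2 + Y^2" and XY: "X + Y = a - b" "X - Y = c - d"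
    using descartes_relation_mult_eq_sum_squares assms(3) by blast
  show ?thesis
  proof (rule sum_two_sq_if_mult_eq_sum_squares[OF assms(1) eq])
    fix p :: int
    assume p: "prime p" "odd p" "p dvd a + b" "p dvd c + d" "p dvd X"
    show "\<not> p dvd Y"
    proof
      assume "p dvd Y"
      have "p dvd a - b" "p dvd c - d"
        unfolding XY[symmetric] using p(5) \<open>p dvd Y\<close> by (rule dvd_add dvd_diff)+
      moreover have "2 * a = (a + b) + (a - b)" "2 * b = (a + b) - (a - b)"
        "2 * c = (c + d) + (c - d)" "2 * d = (c + d) - (c - d)" by simp_all
      ultimately have "p dvd 2 * a" "p dvd 2 * b" "p dvd 2 * c" "p dvd 2 * d"
        using p(3,4) by (metis dvd_add dvd_diff)+
      moreover have "\<not> p dvd 2"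
      proof
        assume "p dvd 2"
        then have "p \<le> 2" by (rule zdvd_imp_le) simp
        then show False using p(1,2) prime_ge_2_int[of p] by simp
      qed
      ultimately have "p dvd a" "p dvd b" "p dvd c" "p dvd d"
        using p(1) prime_dvd_multD by blast+
      then have "p dvd gcd (gcd a b) (gcd c d)" by simp
      then show False using gcd p(1) by (simp add: not_prime_unit)
    qed
  qed
qed

theorem proposition1:
  fixes a b c d :: int
  assumes "a \<ge> 0" "b \<ge> 0" "c \<ge> 0" "d \<ge> 0"
    and "gcd (gcd a b) (gcd c d) = 1"
    and "(a + b + c + d)^2 = 2 * (a^2 + b^2 + c^2 + d^2)"
  shows "sum_two_sq (a + b) \<and> sum_two_sq (a + c) \<and> sum_two_sq (a + d) \<and>
         sum_two_sq (b + c) \<and> sum_two_sq (b + d) \<and> sum_two_sq (c + d)"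
proof -
  note pair = sum_two_sq_add_if_descartes_relation
  note permute = ac_simps gcd.left_commute
  have "sum_two_sq (a + b)" using assms by (intro pair[of a b c d]) simp_all
  moreover have "sum_two_sq (a + c)" using assms by (intro pair[of a c b d]) (simp_all add: permute)
  moreover have "sum_two_sq (a + d)" using assms by (intro pair[of a d b c]) (simp_all add: permute)
  moreover have "sum_two_sq (b + c)" using assms by (intro pair[of b c a d]) (simp_all add: permute)
  moreover have "sum_two_sq (b + d)" using assms by (intro pair[of b d a c]) (simp_all add: permute)
  moreover have "sum_two_sq (c + d)" using assms by (intro pair[of c d a b]) (simp_all add: permute)
  ultimately show ?thesis by blast
qed

end
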